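(* For all integers $m,k\ge 1$, the vector $(m,2,k,1)$ is not 0-realizable.
   Context: All graphs are finite, nonempty, and reflexive (every vertex has a loop). $N[v]$ is the closed neighborhood of $v$ (including $v$). For distinct $v,w$, $w$ strictly corners $v$ if $N[v]\subsetneq N[w]$; $v$ is then a strict corner. A vertex dominates a set if adjacent to all its vertices. Corner ranking: set $G^{(1)}=G$, $k=1$. If $G^{(k)}$ is a clique, give all its vertices rank $k$ and stop. Else if $G^{(k)}$ has no strict corners, give all its vertices rank $\infty$ and stop. Else give every strict corner of $G^{(k)}$ rank $k$, delete them to get $G^{(k+1)}$ (induced subgraph), increase $k$ and repeat. The corner rank of $G$ is the largest rank of a vertex; $X_k$ is the set of rank-$k$ vertices. A graph is cop-win iff its corner rank is finite. A graph of finite corner rank $\alpha\ge2$ is of type 1 if some (equivalently every) vertex of rank $\alpha$ dominates $V(G^{(\alpha-1)})$, and of type 0 otherwise. The rank cardinality vector is $(x_\alpha,\dots,x_1)$ with $x_k=|X_k|$. A vector (finite list of positive integers) is 0-realizable if it is the rank cardinality vector of some cop-win graph of type 0. *)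

theory Defs
  imports Main
begin

definition refl_graph :: "'a set \<Rightarrow> ('a \<Rightarrow> 'a \<Rightarrow> bool) \<Rightarrow> bool" where
  "refl_graph V E \<longleftrightarrow> finite V \<and> V \<noteq> {} \<and> (\<forall>v\<in>V. E v v)
     \<and> (\<forall>v\<in>V. \<forall>w\<in>V. E v w \<longrightarrow> E w v)"

definition nbh :: "('a \<Rightarrow> 'a \<Rightarrow> bool) \<Rightarrow> 'a set \<Rightarrow> 'a \<Rightarrow> 'a set" where
  "nbh E S v = {w \<in> S. E v w}"

definition strict_corners :: "('a \<Rightarrow> 'a \<Rightarrow> bool) \<Rightarrow> 'a set \<Rightarrow> 'a set" where
  "strict_corners E S = {v \<in> S. \<exists>w\<in>S. w \<noteq> v \<and> nbh E S v \<subset> nbh E S w}"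

definition is_clique :: "('a \<Rightarrow> 'a \<Rightarrow> bool) \<Rightarrow> 'a set \<Rightarrow> bool" where
  "is_clique E S \<longleftrightarrow> (\<forall>v\<in>S. \<forall>w\<in>S. E v w)"

text \<open>Gstage E V n is the vertex set of G^(n+1) (0-based index).\<close>
primrec Gstage :: "('a \<Rightarrow> 'a \<Rightarrow> bool) \<Rightarrow> 'a set \<Rightarrow> nat \<Rightarrow> 'a set" where
  "Gstage E V 0 = V"
| "Gstage E V (Suc n) = Gstage E V n - strict_corners E (Gstage E V n)"

text \<open>Finite corner rank (equivalently: cop-win).\<close>
definition finite_corner_rank :: "'a set \<Rightarrow> ('a \<Rightarrow> 'a \<Rightarrow> bool) \<Rightarrow> bool" where
  "finite_corner_rank V E \<longleftrightarrow> (\<exists>n. is_clique E (Gstage E V n))"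

text \<open>The corner rank alpha (meaningful when finite).\<close>
definition corner_rank :: "'a set \<Rightarrow> ('a \<Rightarrow> 'a \<Rightarrow> bool) \<Rightarrow> nat" where
  "corner_rank V E = Suc (LEAST n. is_clique E (Gstage E V n))"

text \<open>X_k, the set of vertices of rank k (1-based), for graphs of finite corner rank.\<close>
definition rank_set :: "'a set \<Rightarrow> ('a \<Rightarrow> 'a \<Rightarrow> bool) \<Rightarrow> nat \<Rightarrow> 'a set" where
  "rank_set V E k =
     (if 1 \<le> k \<and> k < corner_rank V E then strict_corners E (Gstage E V (k - 1))
      else if k = corner_rank V E then Gstage E V (k - 1) else {})"

text \<open>Rank cardinality vector (x_alpha, ..., x_1).\<close>
definition rank_card_vector :: "'a set \<Rightarrow> ('a \<Rightarrow> 'a \<Rightarrow> bool) \<Rightarrow> nat list" where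
  "rank_card_vector V E = rev (map (\<lambda>k. card (rank_set V E k)) [1..<Suc (corner_rank V E)])"

text \<open>Type 0: finite corner rank alpha >= 2 and no vertex of rank alpha dominates V(G^(alpha-1)).\<close>
definition type0 :: "'a set \<Rightarrow> ('a \<Rightarrow> 'a \<Rightarrow> bool) \<Rightarrow> bool" where
  "type0 V E \<longleftrightarrow> finite_corner_rank V E \<and> corner_rank V E \<ge> 2 \<and>
     \<not> (\<exists>v\<in>rank_set V E (corner_rank V E).
          \<forall>w\<in>Gstage E V (corner_rank V E - 2). E v w)"

text \<open>0-realizable: rank cardinality vector of some cop-win graph of type 0
  (vertices taken from nat without loss of generality).\<close>
definition zero_realizable :: "nat list \<Rightarrow> bool" where
  "zero_realizable xs \<longleftrightarrow> (\<exists>(V::nat set) E. refl_graph V E \<and> finite_corner_rank V E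
       \<and> type0 V E \<and> rank_card_vector V E = xs)"

end

theory Submission
  imports Defs
begin

text \<open>Let \<open>X\<^sub>1 = {x}\<close>, \<open>X\<^sub>3 = {a, b}\<close> and let \<open>K = X\<^sub>4\<close> be the final clique, so that
  \<open>V(G^(3)) = {a, b} \<union> K\<close>. Type 0 forbids a vertex of \<open>K\<close> adjacent to both \<open>a\<close> and \<open>b\<close>;
  hence \<open>a\<close> and \<open>b\<close> are non-adjacent, no vertex of \<open>X\<^sub>2\<close> sees both of them, and every vertex
  of \<open>X\<^sub>2\<close> is adjacent to \<open>x\<close> (otherwise it would already be a corner of \<open>G\<close>). The vertex
  cornering \<open>x\<close> therefore dominates \<open>X\<^sub>2\<close>, and so does some vertex \<open>h\<close> of \<open>G^(3)\<close>. But
  \<open>h = a\<close> is impossible since \<open>b\<close> has a neighbour in \<open>X\<^sub>2\<close>, and \<open>h \<in> K\<close> would make \<open>a\<close>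
  (or \<open>h\<close> itself) a strict corner one stage too early.\<close>

lemma strict_corners_subset: "strict_corners E S \<subseteq> S"
  unfolding strict_corners_def by blast

lemma strict_cornersI:
  "\<lbrakk>v \<in> S; w \<in> S; w \<noteq> v; nbh E S v \<subset> nbh E S w\<rbrakk> \<Longrightarrow> v \<in> strict_corners E S"
  unfolding strict_corners_def by blast

lemma strict_cornersE:
  assumes "v \<in> strict_corners E S"
  obtains w where "w \<in> S" "w \<noteq> v" "nbh E S v \<subset> nbh E S w"
  using assms unfolding strict_corners_def by blast

lemma strict_corner_lift:
  assumes "S \<subseteq> T" "v \<in> S" "w \<in> S" "w \<noteq> v" "nbh E S v \<subset> nbh E S w"
    and "\<forall>u\<in>T - S. E v u \<longrightarrow> E w u"
  shows "v \<in> strict_corners E T"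
proof (rule strict_cornersI)
  show "nbh E T v \<subset> nbh E T w"
    using assms unfolding nbh_def by blast
qed (use assms in auto)

lemma length_rank_card_vector: "length (rank_card_vector V E) = corner_rank V E"
  unfolding rank_card_vector_def by simp

lemma is_clique_Gstage_corner_rank:
  "finite_corner_rank V E \<Longrightarrow> is_clique E (Gstage E V (corner_rank V E - 1))"
  unfolding finite_corner_rank_def corner_rank_def
  using LeastI_ex[of "\<lambda>n. is_clique E (Gstage E V n)"] by simp

locale rank4_type0 =
  fixes V :: "'a set" and E :: "'a \<Rightarrow> 'a \<Rightarrow> bool" and x a b :: 'a
  assumes graph: "refl_graph V E"
    and X1_eq: "strict_corners E V = {x}"
    and X3_eq: "strict_corners E (Gstage E V 2) = {a, b}"
    and clique_K: "is_clique E (Gstage E V 3)"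
    and K_not_dominating: "\<not> (\<exists>v\<in>Gstage E V 3. \<forall>w\<in>Gstage E V 2. E v w)"
begin

text \<open>\<open>Gstage E V n\<close> is \<open>V(G^(n+1))\<close>, so \<open>H = V(G^(3))\<close> and \<open>K = X\<^sub>4\<close>.\<close>
abbreviation "G2 \<equiv> Gstage E V 1"
abbreviation "X2 \<equiv> strict_corners E G2"
abbreviation "H \<equiv> Gstage E V 2"
abbreviation "K \<equiv> Gstage E V 3"

lemma swap: "rank4_type0 V E x b a"
  using rank4_type0_axioms unfolding rank4_type0_def by (auto simp: insert_commute)

lemma G2_eq: "G2 = V - {x}"
  using X1_eq by simp

lemma H_eq: "H = G2 - X2"
  by (simp add: numeral_2_eq_2)

lemma K_eq: "K = H - {a, b}"
  using X3_eq by (simp add: numeral_3_eq_3 numeral_2_eq_2)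

lemma x_in_V: "x \<in> V"
  using strict_corners_subset[of E V] X1_eq by blast

lemma corners_in_H: "a \<in> H" "b \<in> H"
  using strict_corners_subset[of E H] X3_eq by auto

lemma H_split: "H = {a, b} \<union> K"
  using K_eq corners_in_H by auto

lemma stages_subset: "K \<subseteq> H" "H \<subseteq> G2" "X2 \<subseteq> G2" "G2 \<subseteq> V"
  using K_eq H_eq G2_eq strict_corners_subset[of E G2] by auto

lemma stages_subset_V: "X2 \<subseteq> V" "H \<subseteq> V" "K \<subseteq> V"
  using stages_subset by auto

lemma corners_in_V: "a \<in> V" "b \<in> V"
  using corners_in_H stages_subset_V by auto

lemma adj_refl: "v \<in> V \<Longrightarrow> E v v"
  using graph unfolding refl_graph_def by blast

lemma adj_sym: "\<lbrakk>v \<in> V; w \<in> V; E v w\<rbrakk> \<Longrightarrow> E w v"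
  using graph unfolding refl_graph_def by blast

lemma corner_nbh_H: "v \<in> {a, b} \<Longrightarrow> \<exists>w\<in>H. w \<noteq> v \<and> nbh E H v \<subset> nbh E H w"
  using X3_eq unfolding strict_corners_def by blast

lemma K_not_adj_both: "\<lbrakk>u \<in> K; E u a; E u b\<rbrakk> \<Longrightarrow> False"
  using clique_K K_not_dominating H_split unfolding is_clique_def by auto

lemma corners_not_adj: "\<not> E a b"
proof
  assume ab: "E a b"
  have ba: "E b a" using adj_sym ab corners_in_H stages_subset by blast
  obtain wa where wa: "wa \<in> H" "wa \<noteq> a" "nbh E H a \<subset> nbh E H wa" using corner_nbh_H by blast
  obtain wb where wb: "wb \<in> H" "wb \<noteq> b" "nbh E H b \<subset> nbh E H wb" using corner_nbh_H by blast
  have "a \<in> nbh E H a" "b \<in> nbh E H a" "a \<in> nbh E H b" "b \<in> nbh E H b"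
    using ab ba adj_refl corners_in_H stages_subset unfolding nbh_def by auto
  then have "E wa a" "E wa b" "E wb a" "E wb b" using wa wb unfolding nbh_def by auto
  then have "wa = b" "wb = a" using K_not_adj_both wa wb H_split by auto
  with wa wb show False by auto
qed

lemma corner_dominated_in_K: "\<exists>w\<in>K. E w a \<and> nbh E H a \<subset> nbh E H w"
proof -
  obtain w where w: "w \<in> H" "w \<noteq> a" "nbh E H a \<subset> nbh E H w" using corner_nbh_H by blast
  have "a \<in> nbh E H a" using adj_refl corners_in_H stages_subset unfolding nbh_def by auto
  then have "E w a" using w unfolding nbh_def by auto
  moreover have "w \<noteq> b" using corners_not_adj adj_sym[of b a] corners_in_V \<open>E w a\<close> by auto
  ultimately show ?thesis using w H_split by auto
qed

text \<open>Otherwise \<open>z\<close> would be a strict corner of \<open>G\<close> other than \<open>x\<close>.\<close>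
lemma G2_corner_adj_x:
  assumes "z \<in> G2" "d \<in> G2" "d \<noteq> z" "nbh E G2 z \<subset> nbh E G2 d"
  shows "E z x \<and> \<not> E d x"
proof (rule ccontr)
  assume "\<not> (E z x \<and> \<not> E d x)"
  then have "z \<in> strict_corners E V"
    using strict_corner_lift[of G2 V z d E] assms stages_subset G2_eq by auto
  then show False using X1_eq assms(1) G2_eq by auto
qed

lemma X2_dominated_in_H:
  assumes "z \<in> X2"
  shows "E z x \<and> (\<exists>d\<in>H. d \<noteq> z \<and> nbh E G2 z \<subset> nbh E G2 d)"
proof -
  obtain d where d: "d \<in> G2" "d \<noteq> z" "nbh E G2 z \<subset> nbh E G2 d"
    using assms by (rule strict_cornersE)
  have zx: "E z x" and dx: "\<not> E d x"
    using G2_corner_adj_x[OF _ d] assms stages_subset by auto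
  have "d \<notin> X2"
  proof
    assume "d \<in> X2"
    then obtain d' where "d' \<in> G2" "d' \<noteq> d" "nbh E G2 d \<subset> nbh E G2 d'"
      by (rule strict_cornersE)
    then show False using G2_corner_adj_x[of d d'] dx d(1) by blast
  qed
  then show ?thesis using zx d H_eq by auto
qed

lemma a_notin_K: "a \<notin> K" and b_notin_K: "b \<notin> K"
  using K_eq by auto

lemma corners_notin_X2: "a \<notin> X2" "b \<notin> X2"
  using corners_in_H H_eq by auto

lemma corner_has_X2_neighbour: "\<exists>z\<in>X2. E a z"
proof (rule ccontr)
  assume no_nb: "\<not> (\<exists>z\<in>X2. E a z)"
  obtain w where w: "w \<in> K" "E w a" "nbh E H a \<subset> nbh E H w" using corner_dominated_in_K by blast
  have "w \<in> H" "w \<noteq> a" using w(1) stages_subset a_notin_K by auto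
  moreover have "\<forall>u\<in>G2 - H. E a u \<longrightarrow> E w u" using no_nb H_eq by auto
  ultimately have "a \<in> X2"
    using strict_corner_lift[of H G2 a w E] w(3) corners_in_H stages_subset by blast
  then show False using corners_notin_X2 by blast
qed

lemma X2_not_adj_both: "\<lbrakk>z \<in> X2; E z a; E z b\<rbrakk> \<Longrightarrow> False"
proof -
  assume z: "z \<in> X2" "E z a" "E z b"
  obtain d where d: "d \<in> H" "d \<noteq> z" "nbh E G2 z \<subset> nbh E G2 d"
    using X2_dominated_in_H z(1) by blast
  have "a \<in> nbh E G2 z" "b \<in> nbh E G2 z"
    using z corners_in_H stages_subset unfolding nbh_def by auto
  then have da: "E d a" and db: "E d b" using d unfolding nbh_def by auto
  have "d \<noteq> a" using db corners_not_adj by auto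
  moreover have "d \<noteq> b" using da corners_not_adj adj_sym[of b a] corners_in_V by auto
  ultimately have "d \<in> K" using d(1) H_split by auto
  then show False using K_not_adj_both da db by blast
qed

text \<open>Such an \<open>h\<close> would strictly corner \<open>a\<close> already in \<open>G^(2)\<close>.\<close>
lemma K_dominating_X2_not_adj_corner:
  assumes h: "h \<in> K" "\<forall>z\<in>X2. E h z" "E h a"
  shows False
proof -
  obtain w where w: "w \<in> K" "E w a" "nbh E H a \<subset> nbh E H w" using corner_dominated_in_K by blast
  have "nbh E G2 a \<subseteq> nbh E G2 h"
  proof
    fix u assume "u \<in> nbh E G2 a"
    then have u: "u \<in> G2" "E a u" unfolding nbh_def by auto
    have "E h u"
    proof (cases "u \<in> X2")
      case False
      then have "u = a \<or> u \<in> K" using u H_eq H_split corners_not_adj by auto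
      then show ?thesis using h clique_K unfolding is_clique_def by auto
    qed (use h in auto)
    then show "u \<in> nbh E G2 h" using u unfolding nbh_def by auto
  qed
  moreover have "nbh E G2 a \<noteq> nbh E G2 h"
  proof -
    obtain v where v: "v \<in> H" "E w v" "\<not> E a v" using w(3) unfolding nbh_def by auto
    have "v \<noteq> b" using K_not_adj_both w v by blast
    moreover have "v \<noteq> a" using v adj_refl stages_subset by auto
    ultimately have "v \<in> K" using v H_split by auto
    then have "E h v" using h clique_K unfolding is_clique_def by auto
    then show ?thesis using v stages_subset unfolding nbh_def by auto
  qed
  ultimately have "nbh E G2 a \<subset> nbh E G2 h" by (rule psubsetI)
  moreover have "h \<in> G2" "a \<in> G2" "h \<noteq> a"
    using h(1) corners_in_H stages_subset a_notin_K by auto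
  ultimately have "a \<in> X2" by (blast intro: strict_cornersI)
  then show False using corners_notin_X2 by blast
qed

text \<open>Such an \<open>h\<close> sees neither \<open>a\<close> nor \<open>b\<close>, so the dominator of \<open>a\<close> strictly corners it in \<open>G^(3)\<close>.\<close>
lemma K_not_dominating_X2: "\<lbrakk>h \<in> K; \<forall>z\<in>X2. E h z\<rbrakk> \<Longrightarrow> False"
proof -
  assume h: "h \<in> K" "\<forall>z\<in>X2. E h z"
  interpret swapped: rank4_type0 V E x b a by (rule swap)
  have ha: "\<not> E h a" using K_dominating_X2_not_adj_corner h by blast
  have hb: "\<not> E h b" using swapped.K_dominating_X2_not_adj_corner h by blast
  obtain w where w: "w \<in> K" "E w a" "nbh E H a \<subset> nbh E H w" using corner_dominated_in_K by blast
  have "nbh E H h \<subseteq> nbh E H w"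
    using ha hb w(1) H_split clique_K unfolding is_clique_def nbh_def by auto
  moreover have "nbh E H h \<noteq> nbh E H w" using w(2) ha corners_in_H unfolding nbh_def by auto
  ultimately have "nbh E H h \<subset> nbh E H w" by (rule psubsetI)
  moreover have "h \<in> H" "w \<in> H" "w \<noteq> h" using h(1) w(1,2) ha stages_subset by auto
  ultimately have "h \<in> strict_corners E H" by (blast intro: strict_cornersI)
  then show False using X3_eq h(1) a_notin_K b_notin_K by auto
qed

lemma corner_not_dominating_X2: "\<not> (\<forall>z\<in>X2. E a z)"
proof
  assume dom: "\<forall>z\<in>X2. E a z"
  interpret swapped: rank4_type0 V E x b a by (rule swap)
  obtain z where z: "z \<in> X2" "E b z" using swapped.corner_has_X2_neighbour by blast
  have "E z a" "E z b"
    using z dom adj_sym[of a z] adj_sym[of b z] corners_in_V stages_subset_V by auto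
  then show False using X2_not_adj_both z(1) by blast
qed

lemma H_vertex_dominating_X2: "\<exists>h\<in>H. \<forall>z\<in>X2. E h z"
proof -
  have "x \<in> strict_corners E V" using X1_eq by simp
  then obtain y where y: "y \<in> V" "y \<noteq> x" "nbh E V x \<subset> nbh E V y"
    by (rule strict_cornersE)
  have y_dom: "\<forall>z\<in>X2. E y z"
  proof
    fix z assume z: "z \<in> X2"
    then have "E z x" using X2_dominated_in_H by blast
    then have "E x z" using adj_sym z x_in_V stages_subset_V by blast
    then show "E y z" using y z stages_subset_V unfolding nbh_def by blast
  qed
  show ?thesis
  proof (cases "y \<in> X2")
    case False
    have "y \<in> G2" using y(1,2) G2_eq by blast
    with False have "y \<in> H" using H_eq by blast
    then show ?thesis using y_dom by blast
  next
    case True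
    then obtain d where d: "d \<in> H" "nbh E G2 y \<subset> nbh E G2 d" using X2_dominated_in_H by blast
    then have "\<forall>z\<in>X2. E d z" using y_dom stages_subset unfolding nbh_def by blast
    then show ?thesis using d(1) by blast
  qed
qed

lemma no_such_graph: False
proof -
  interpret swapped: rank4_type0 V E x b a by (rule swap)
  obtain h where h: "h \<in> H" "\<forall>z\<in>X2. E h z" using H_vertex_dominating_X2 by blast
  then consider "h \<in> K" | "h = a" | "h = b" using H_split by blast
  then show False
    using h(2) K_not_dominating_X2 corner_not_dominating_X2 swapped.corner_not_dominating_X2
    by cases blast+
qed

end

theorem theorem3p27:
  fixes m k :: nat
  assumes "m \<ge> 1" and "k \<ge> 1"
  shows "\<not> zero_realizable [m, 2, k, 1]"
proof
  assume "zero_realizable [m, 2, k, 1]"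
  then obtain V :: "nat set" and E where graph: "refl_graph V E"
    and fcr: "finite_corner_rank V E" and t0: "type0 V E"
    and rv: "rank_card_vector V E = [m, 2, k, 1]"
    unfolding zero_realizable_def by blast
  have rank: "corner_rank V E = 4"
    using rv length_rank_card_vector[of V E] by simp
  have "[1..<Suc 4] = [1, 2, 3, 4::nat]" by (simp add: upt_rec)
  then have "card (rank_set V E 1) = 1" "card (rank_set V E 3) = 2"
    using rv unfolding rank_card_vector_def rank by simp_all
  then have "card (strict_corners E V) = 1" "card (strict_corners E (Gstage E V 2)) = 2"
    unfolding rank_set_def rank by simp_all
  then obtain x a b where "strict_corners E V = {x}" "strict_corners E (Gstage E V 2) = {a, b}"
    by (auto simp: card_Suc_eq card_2_iff)
  moreover have "is_clique E (Gstage E V 3)"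
    using is_clique_Gstage_corner_rank[OF fcr] rank by simp
  moreover have "\<not> (\<exists>v\<in>Gstage E V 3. \<forall>w\<in>Gstage E V 2. E v w)"
    using t0 unfolding type0_def rank_set_def rank by simp
  ultimately interpret rank4_type0 V E x a b
    using graph by unfold_locales
  show False by (rule no_such_graph)
qed

end
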